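(* Let $k\ge1$, $m=2k$, and let $R_m^+(\hat K)=P_m(\hat K)+\mathrm{span}\{\hat x^m\hat y,\ \hat x\hat y^m\}$. Let $g_{\pm1},\dots,g_{\pm k}$ be the $2k$ zeros of the Legendre polynomial of degree $2k$ on $[-1,1]$, indexed so that $0<g_1<\dots<g_k$ and $g_{-i}=-g_i$. Then every $\hat v\in R_m^+(\hat K)$ satisfies $$\sum_{\substack{i=-k\\ i\ne 0}}^{k}\frac{\hat v(1,g_i)-\hat v(-1,g_i)-\hat v(g_i,1)+\hat v(g_i,-1)}{g_i(1-g_i^2)\prod_{\substack{j=1\\ j\ne |i|}}^{k}(g_i^2-g_j^2)}=0.$$
   Context: $\hat K=[-1,1]^2$ with coordinates $(\hat x,\hat y)$; $P_m(\hat K)$ is the space of polynomials of total degree $\le m$. Empty products equal $1$. *)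

theory Defs
  imports "HOL-Computational_Algebra.Polynomial" Complex_Main
begin

definition legendre :: "nat \<Rightarrow> real poly" where
  "legendre n = smult (1 / (2 ^ n * fact n)) ((pderiv ^^ n) ([:-1, 0, 1:] ^ n))"

definition in_Rm_plus :: "nat \<Rightarrow> (real \<Rightarrow> real \<Rightarrow> real) \<Rightarrow> bool" where
  "in_Rm_plus m v \<longleftrightarrow> (\<exists>(c :: nat \<Rightarrow> nat \<Rightarrow> real) (a :: real) (b :: real).
      \<forall>x y. v x y = (\<Sum>i\<le>m. \<Sum>j\<le>m - i. c i j * x ^ i * y ^ j)
                    + a * x ^ m * y + b * x * y ^ m)"

end

theory Submission
  imports Defs
begin

(*
  The denominators are, up to the factor -2, the node products prod_{j <> i} (x_i - x_j)
  for the 2k+2 symmetric nodes +-g_1, ..., +-g_k, +-1 (the g_i differ from +-1 because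
  P_{2k}(1) = 1).  Every element of R_m^+ restricts to a polynomial of degree <= m on
  horizontal and vertical lines, so the edge function h(t) = v(1,t) - v(-1,t) - v(t,1) + v(t,-1)
  has degree <= 2k and its divided difference of order 2k+1 on these nodes vanishes.
  In that divided difference the two terms at +-1 cancel, since h(1) = h(-1) and the node
  products at +-1 are opposite; what remains is -1/2 times the sum in question.
*)

definition divided_difference :: "('i \<Rightarrow> 'a::field) \<Rightarrow> 'i set \<Rightarrow> ('a \<Rightarrow> 'a) \<Rightarrow> 'a" where
  "divided_difference x I h = (\<Sum>i\<in>I. h (x i) / (\<Prod>j\<in>I - {i}. x i - x j))"

lemma degree_prod_linear:
  fixes a :: "'i \<Rightarrow> 'a::idom"
  shows "degree (\<Prod>j\<in>A. [:- a j, 1:]) = card A"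
  by (subst degree_prod_eq_sum_degree) auto

lemma lead_coeff_prod_linear:
  fixes a :: "'i \<Rightarrow> 'a::idom"
  shows "lead_coeff (\<Prod>j\<in>A. [:- a j, 1:]) = 1"
  by (simp add: lead_coeff_prod)

lemma lagrange_interpolation:
  fixes x :: "'i \<Rightarrow> 'a::field"
  assumes fin: "finite I" and inj: "inj_on x I" and deg: "degree f < card I"
  shows "f = (\<Sum>i\<in>I. smult (poly f (x i) / (\<Prod>j\<in>I - {i}. x i - x j)) (\<Prod>j\<in>I - {i}. [:- x j, 1:]))"
    (is "f = ?L")
proof (rule poly_eqI_degree[of "x ` I"])
  fix z assume "z \<in> x ` I"
  then obtain i0 where i0: "i0 \<in> I" and z: "z = x i0" by blast
  have "poly ?L (x i0) = (\<Sum>i\<in>I. poly f (x i) / (\<Prod>j\<in>I - {i}. x i - x j) * (\<Prod>j\<in>I - {i}. x i0 - x j))"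
    by (simp add: poly_sum poly_prod)
  also have "\<dots> = poly f (x i0) / (\<Prod>j\<in>I - {i0}. x i0 - x j) * (\<Prod>j\<in>I - {i0}. x i0 - x j)"
    using fin i0 by (subst sum.remove[OF fin i0]) (auto intro!: sum.neutral prod_zero)
  also have "\<dots> = poly f (x i0)"
    using fin i0 inj by (simp add: inj_on_eq_iff)
  finally show "poly f z = poly ?L z"
    by (simp add: z)
next
  have "degree ?L \<le> card I - 1"
    using fin by (intro degree_sum_le order.trans[OF degree_smult_le])
      (auto simp: degree_prod_linear card_Diff_singleton)
  then show "degree ?L < card (x ` I)"
    using deg card_image[OF inj] by linarith
  show "degree f < card (x ` I)"
    using deg card_image[OF inj] by simp
qed

text \<open>The coefficient of degree card I - 1 of the Lagrange form is the divided difference.\<close>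
lemma divided_difference_poly_eq_0:
  fixes x :: "'i \<Rightarrow> 'a::field"
  assumes fin: "finite I" and inj: "inj_on x I" and deg: "degree f + 2 \<le> card I"
  shows "divided_difference x I (poly f) = 0"
proof -
  have basis: "coeff (\<Prod>j\<in>I - {i}. [:- x j, 1:]) (card I - 1) = 1" if "i \<in> I" for i
    using lead_coeff_prod_linear[of x "I - {i}"] degree_prod_linear[of x "I - {i}"] fin that
    by (simp add: card_Diff_singleton)
  have "coeff f (card I - 1) = divided_difference x I (poly f)"
    by (subst lagrange_interpolation[OF fin inj]) (use deg basis in \<open>auto simp: divided_difference_def coeff_sum intro: sum.cong\<close>)
  moreover have "coeff f (card I - 1) = 0"
    using deg by (intro coeff_eq_0) linarith
  ultimately show ?thesis by simp
qed

lemma nonzero_int_range: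
  "{-int n..int n} - {0} = int ` {1..n} \<union> (\<lambda>j. - int j) ` {1..n}"
proof -
  have "j \<in> int ` {1..n} \<union> (\<lambda>j. - int j) ` {1..n}" if "j \<in> {-int n..int n} - {0}" for j
  proof (cases "0 < j")
    case True
    then show ?thesis using that by (intro UnI1 image_eqI[of _ int "nat j"]) auto
  next
    case False
    then show ?thesis using that by (intro UnI2 image_eqI[of _ _ "nat (- j)"]) auto
  qed
  then show ?thesis by (intro subset_antisym subsetI) auto
qed

definition sym_node :: "(nat \<Rightarrow> 'a::uminus) \<Rightarrow> int \<Rightarrow> 'a" where
  "sym_node y i = (if i > 0 then y (nat i) else - y (nat (- i)))"

lemma sym_node_of_nat [simp]: "0 < j \<Longrightarrow> sym_node y (int j) = y j"
  by (simp add: sym_node_def)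

lemma sym_node_minus_of_nat [simp]: "sym_node y (- int j) = - y j"
  by (simp add: sym_node_def)

lemma sym_node_uminus:
  fixes y :: "nat \<Rightarrow> 'a::group_add"
  shows "i \<noteq> 0 \<Longrightarrow> sym_node y (- i) = - sym_node y i"
  by (simp add: sym_node_def)

lemma strict_mono_on_sym_node:
  fixes y :: "nat \<Rightarrow> 'a::linordered_ab_group_add"
  assumes mono: "strict_mono_on {1..n} y" and pos: "0 < y 1"
  shows "strict_mono_on ({-int n..int n} - {0}) (sym_node y)"
proof (rule strict_mono_onI)
  have pos': "0 < y j" if "j \<in> {1..n}" for j
    using pos mono that by (cases "j = 1") (auto dest: strict_mono_onD[of _ _ 1 j])
  fix i j assume ij: "i \<in> {-int n..int n} - {0}" "j \<in> {-int n..int n} - {0}" "i < j"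
  then have "i \<noteq> 0" "j \<noteq> 0"
    by auto
  with \<open>i < j\<close> consider "0 < i" | "i < 0" "0 < j" | "j < 0"
    by linarith
  then show "sym_node y i < sym_node y j"
  proof cases
    case 1
    then show ?thesis
      using ij by (auto simp: sym_node_def intro!: strict_mono_onD[OF mono])
  next
    case 2
    then have "0 < y (nat (- i))" "0 < y (nat j)"
      using ij by (auto intro!: pos')
    with 2 show ?thesis
      by (auto simp: sym_node_def intro: less_trans[of _ 0])
  next
    case 3
    then show ?thesis
      using ij by (auto simp: sym_node_def intro!: strict_mono_onD[OF mono])
  qed
qed

lemma prod_sym_node_diff:
  fixes y :: "nat \<Rightarrow> 'a::comm_ring_1"
  assumes i: "i \<in> {-int n..int n} - {0}"
  shows "(\<Prod>j\<in>{-int n..int n} - {0} - {i}. sym_node y i - sym_node y j)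
         = 2 * sym_node y i * (\<Prod>j\<in>{1..n} - {nat \<bar>i\<bar>}. (sym_node y i)\<^sup>2 - (y j)\<^sup>2)"
proof -
  define x where "x = sym_node y i"
  define A where "A = {1..n} - {nat \<bar>i\<bar>}"
  have split: "{-int n..int n} - {0} - {i} = insert (- i) (int ` A \<union> (\<lambda>j. - int j) ` A)"
    using i unfolding A_def nonzero_int_range by (auto simp: image_iff)
  have disj: "- i \<notin> int ` A \<union> (\<lambda>j. - int j) ` A" "int ` A \<inter> (\<lambda>j. - int j) ` A = {}"
    using i unfolding A_def by auto
  have "(\<Prod>j\<in>{-int n..int n} - {0} - {i}. x - sym_node y j)
        = (x - sym_node y (- i)) * ((\<Prod>j\<in>A. x - y j) * (\<Prod>j\<in>A. x + y j))"
    unfolding split using disj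
    by (simp add: prod.union_disjoint prod.reindex inj_on_def A_def)
  also have "x - sym_node y (- i) = 2 * x"
    using i by (simp add: x_def sym_node_uminus)
  also have "(\<Prod>j\<in>A. x - y j) * (\<Prod>j\<in>A. x + y j) = (\<Prod>j\<in>A. x\<^sup>2 - (y j)\<^sup>2)"
    by (simp add: prod.distrib[symmetric] power2_eq_square algebra_simps)
  finally show ?thesis
    unfolding x_def A_def .
qed

definition poly_fun_deg_le :: "nat \<Rightarrow> ('a::comm_semiring_1 \<Rightarrow> 'a) \<Rightarrow> bool" where
  "poly_fun_deg_le m h \<longleftrightarrow> (\<exists>p. degree p \<le> m \<and> h = poly p)"

lemma poly_fun_deg_le_power: "j \<le> m \<Longrightarrow> poly_fun_deg_le m (\<lambda>t. c * t ^ j)"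
  unfolding poly_fun_deg_le_def
  by (intro exI[of _ "monom c j"]) (auto simp: fun_eq_iff poly_monom intro: order.trans[OF degree_monom_le])

lemma poly_fun_deg_le_add:
  assumes "poly_fun_deg_le m h1" and "poly_fun_deg_le m h2"
  shows "poly_fun_deg_le m (\<lambda>t. h1 t + h2 t)"
proof -
  obtain p1 p2 where "degree p1 \<le> m" "h1 = poly p1" "degree p2 \<le> m" "h2 = poly p2"
    using assms unfolding poly_fun_deg_le_def by blast
  then show ?thesis
    unfolding poly_fun_deg_le_def by (intro exI[of _ "p1 + p2"]) (auto intro: degree_add_le)
qed

lemma poly_fun_deg_le_diff:
  fixes h1 h2 :: "'a::comm_ring_1 \<Rightarrow> 'a"
  assumes "poly_fun_deg_le m h1" and "poly_fun_deg_le m h2"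
  shows "poly_fun_deg_le m (\<lambda>t. h1 t - h2 t)"
proof -
  obtain p1 p2 where "degree p1 \<le> m" "h1 = poly p1" "degree p2 \<le> m" "h2 = poly p2"
    using assms unfolding poly_fun_deg_le_def by blast
  then show ?thesis
    unfolding poly_fun_deg_le_def by (intro exI[of _ "p1 - p2"]) (auto intro: degree_diff_le)
qed

lemma poly_fun_deg_le_sum:
  "(\<And>i. i \<in> A \<Longrightarrow> poly_fun_deg_le m (h i)) \<Longrightarrow> poly_fun_deg_le m (\<lambda>t. \<Sum>i\<in>A. h i t)"
proof (induction A rule: infinite_finite_induct)
  case (infinite A)
  then show ?case by (auto simp: poly_fun_deg_le_def intro!: exI[of _ 0])
next
  case empty
  then show ?case by (auto simp: poly_fun_deg_le_def intro!: exI[of _ 0])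
next
  case (insert i A)
  then show ?case by (simp add: poly_fun_deg_le_add)
qed

lemma in_Rm_plus_restrict:
  assumes v: "in_Rm_plus m v" and m: "1 \<le> m"
  shows "poly_fun_deg_le m (\<lambda>t. v x0 t)" and "poly_fun_deg_le m (\<lambda>t. v t y0)"
proof -
  obtain c a b where v_eq: "\<And>x y. v x y = (\<Sum>i\<le>m. \<Sum>j\<le>m - i. c i j * x ^ i * y ^ j)
      + a * x ^ m * y + b * x * y ^ m"
    using v unfolding in_Rm_plus_def by blast
  have restrict_x: "(\<lambda>t. v x0 t) = (\<lambda>t. (\<Sum>i\<le>m. \<Sum>j\<le>m - i. (c i j * x0 ^ i) * t ^ j)
      + (a * x0 ^ m) * t ^ 1 + (b * x0) * t ^ m)"
    by (simp add: v_eq mult.assoc)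
  show "poly_fun_deg_le m (\<lambda>t. v x0 t)"
    unfolding restrict_x using m by (intro poly_fun_deg_le_add poly_fun_deg_le_sum poly_fun_deg_le_power) auto
  have restrict_y: "(\<lambda>t. v t y0) = (\<lambda>t. (\<Sum>i\<le>m. \<Sum>j\<le>m - i. (c i j * y0 ^ j) * t ^ i)
      + a * y0 * t ^ m + (b * y0 ^ m) * t ^ 1)"
    by (simp add: v_eq mult_ac)
  show "poly_fun_deg_le m (\<lambda>t. v t y0)"
    unfolding restrict_y using m by (intro poly_fun_deg_le_add poly_fun_deg_le_sum poly_fun_deg_le_power) auto
qed

lemma prod_sym_node_diff_extend_one:
  fixes y :: "nat \<Rightarrow> 'a::comm_ring_1"
  assumes i: "i \<in> {-int n..int n} - {0}"
  shows "(\<Prod>j\<in>{-int (Suc n)..int (Suc n)} - {0} - {i}. sym_node (y(Suc n := 1)) i - sym_node (y(Suc n := 1)) j)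
         = -2 * (sym_node y i * (1 - (sym_node y i)\<^sup>2) * (\<Prod>j\<in>{1..n} - {nat \<bar>i\<bar>}. (sym_node y i)\<^sup>2 - (y j)\<^sup>2))"
proof -
  have "{1..Suc n} - {nat \<bar>i\<bar>} = insert (Suc n) ({1..n} - {nat \<bar>i\<bar>})"
    using i by auto
  moreover have "sym_node (y(Suc n := 1)) i = sym_node y i"
    using i by (auto simp: sym_node_def)
  moreover have "(\<Prod>j\<in>{1..n} - {nat \<bar>i\<bar>}. (sym_node y i)\<^sup>2 - ((y(Suc n := 1)) j)\<^sup>2)
      = (\<Prod>j\<in>{1..n} - {nat \<bar>i\<bar>}. (sym_node y i)\<^sup>2 - (y j)\<^sup>2)"
    by (intro prod.cong) auto
  ultimately show ?thesis
    using prod_sym_node_diff[of i "Suc n" "y(Suc n := 1)"] i by (simp add: algebra_simps)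
qed

lemma strict_mono_on_fun_upd_Suc:
  fixes y :: "nat \<Rightarrow> 'a::order"
  assumes mono: "strict_mono_on {1..n} y" and less: "\<forall>j\<in>{1..n}. y j < c"
  shows "strict_mono_on {1..Suc n} (y(Suc n := c))"
proof (rule strict_mono_onI)
  fix i j assume "i \<in> {1..Suc n}" "j \<in> {1..Suc n}" "i < j"
  then show "(y(Suc n := c)) i < (y(Suc n := c)) j"
    using less by (cases "j = Suc n") (auto intro: strict_mono_onD[OF mono])
qed

lemma sum_sym_nodes_poly_eq_0:
  fixes y :: "nat \<Rightarrow> real" and f :: "real poly"
  assumes mono: "strict_mono_on {1..n} y" and pos: "0 < y 1" and lt1: "\<forall>j\<in>{1..n}. y j < 1"
    and deg: "degree f \<le> 2 * n" and ends: "poly f 1 = poly f (-1)"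
  shows "(\<Sum>i\<in>{-int n..int n} - {0}. poly f (sym_node y i)
           / (sym_node y i * (1 - (sym_node y i)\<^sup>2) * (\<Prod>j\<in>{1..n} - {nat \<bar>i\<bar>}. (sym_node y i)\<^sup>2 - (y j)\<^sup>2))) = 0"
    (is "(\<Sum>i\<in>?J. poly f (sym_node y i) / ?D i) = 0")
proof -
  define z where "z = y(Suc n := 1)"
  define I where "I = {-int (Suc n)..int (Suc n)} - {0}"
  define w where "w i = (\<Prod>j\<in>I - {i}. sym_node z i - sym_node z j)" for i
  have inj: "inj_on (sym_node z) I"
    unfolding I_def z_def
    by (intro strict_mono_on_imp_inj_on strict_mono_on_sym_node strict_mono_on_fun_upd_Suc mono lt1)
      (use pos in simp)
  have "divided_difference (sym_node z) I (poly f) = 0"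
    using inj deg by (intro divided_difference_poly_eq_0) (auto simp: I_def card_Diff_singleton)
  then have "(\<Sum>i\<in>I. poly f (sym_node z i) / w i) = 0"
    unfolding divided_difference_def w_def .
  moreover have "I = insert (int (Suc n)) (insert (- int (Suc n)) ?J)"
    unfolding I_def by auto
  moreover have "sym_node z i = sym_node y i" if "i \<in> ?J" for i
    using that by (auto simp: sym_node_def z_def)
  ultimately have sum_I: "poly f 1 / w (int (Suc n)) + poly f (-1) / w (- int (Suc n))
      + (\<Sum>i\<in>?J. poly f (sym_node y i) / w i) = 0"
    by (simp add: z_def add.assoc del: of_nat_Suc)
  have "w (- int (Suc n)) = - w (int (Suc n))"
    using prod_sym_node_diff[of "int (Suc n)" "Suc n" z] prod_sym_node_diff[of "- int (Suc n)" "Suc n" z]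
    by (simp add: w_def I_def z_def del: of_nat_Suc)
  then have ends_cancel: "poly f 1 / w (int (Suc n)) + poly f (-1) / w (- int (Suc n)) = 0"
    using ends by simp
  have w_inner: "w i = -2 * ?D i" if "i \<in> ?J" for i
    using prod_sym_node_diff_extend_one[OF that] by (simp add: w_def I_def z_def)
  have "(\<Sum>i\<in>?J. poly f (sym_node y i) / ?D i) / -2 = (\<Sum>i\<in>?J. poly f (sym_node y i) / w i)"
    by (simp add: sum_divide_distrib w_inner mult.commute sum_negf)
  also have "\<dots> = 0"
    using sum_I ends_cancel by simp
  finally show ?thesis
    by simp
qed

lemma poly_higher_pderiv_linear_power:
  fixes q :: "'a::{idom,ring_char_0} poly"
  shows "poly ((pderiv ^^ n) ([:- a, 1:] ^ n * q)) a = fact n * poly q a"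
proof (induction n arbitrary: q)
  case 0
  then show ?case by simp
next
  case (Suc n)
  have "pderiv [:- a, 1:] = 1"
    by (simp add: pderiv_pCons)
  moreover have "X ^ Suc n * pderiv q + q * (smult (of_nat (Suc n)) (X ^ n) * 1)
      = X ^ n * (smult (of_nat (Suc n)) q + X * pderiv q)" for X :: "'a poly"
    by (simp add: algebra_simps)
  ultimately have "pderiv ([:- a, 1:] ^ Suc n * q) = [:- a, 1:] ^ n * (smult (of_nat (Suc n)) q + [:- a, 1:] * pderiv q)"
    by (simp only: pderiv_mult pderiv_power_Suc)
  then have "(pderiv ^^ Suc n) ([:- a, 1:] ^ Suc n * q)
             = (pderiv ^^ n) ([:- a, 1:] ^ n * (smult (of_nat (Suc n)) q + [:- a, 1:] * pderiv q))"
    by (simp add: funpow_Suc_right del: funpow.simps)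
  then show ?case
    using Suc.IH[of "smult (of_nat (Suc n)) q + [:- a, 1:] * pderiv q"] by simp
qed

lemma poly_legendre_one: "poly (legendre n) 1 = 1"
proof -
  have "[:-1, 0, 1:] ^ n = [:- 1, 1:] ^ n * [:1, 1::real:] ^ n"
    by (simp add: power_mult_distrib[symmetric])
  then have "poly ((pderiv ^^ n) ([:-1, 0, 1:] ^ n)) 1 = fact n * (2::real) ^ n"
    using poly_higher_pderiv_linear_power[of n 1 "[:1, 1:] ^ n"] by (simp add: poly_power)
  then show ?thesis
    by (simp add: legendre_def)
qed

theorem mainTheorem5:
  fixes k :: nat and m :: nat and g :: "nat \<Rightarrow> real" and v :: "real \<Rightarrow> real \<Rightarrow> real"
  assumes k: "k \<ge> 1"
    and m: "m = 2 * k"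
    and g_pos: "0 < g 1"
    and g_mono: "\<And>i j. 1 \<le> i \<Longrightarrow> i < j \<Longrightarrow> j \<le> k \<Longrightarrow> g i < g j"
    and g_zeros: "{x \<in> {-1..1}. poly (legendre (2 * k)) x = 0}
                  = g ` {1..k} \<union> (\<lambda>i. - g i) ` {1..k}"
    and v: "in_Rm_plus m v"
  shows "(let G = (\<lambda>i::int. if i > 0 then g (nat i) else - g (nat (- i))) in
          (\<Sum>i\<in>{-int k..int k} - {0}.
             (v 1 (G i) - v (-1) (G i) - v (G i) 1 + v (G i) (-1))
             / (G i * (1 - (G i)\<^sup>2) * (\<Prod>j\<in>{1..k} - {nat \<bar>i\<bar>}. (G i)\<^sup>2 - (g j)\<^sup>2)))) = 0"
proof -
  define h where "h t = v 1 t - v (-1) t - v t 1 + v t (-1)" for t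
  have "poly_fun_deg_le (2 * k) h"
    unfolding h_def using in_Rm_plus_restrict[OF v] k m
    by (intro poly_fun_deg_le_add poly_fun_deg_le_diff) auto
  then obtain f where deg: "degree f \<le> 2 * k" and f: "poly f = h"
    unfolding poly_fun_deg_le_def by metis
  have ends: "poly f 1 = poly f (-1)"
    unfolding f h_def by simp
  have mono: "strict_mono_on {1..k} g"
    by (rule strict_mono_onI) (auto intro: g_mono)
  have "g j < 1" if "j \<in> {1..k}" for j
  proof -
    have "g j \<le> 1" "poly (legendre (2 * k)) (g j) = 0"
      using that g_zeros by auto
    then show ?thesis
      using poly_legendre_one[of "2 * k"] by (cases "g j = 1") auto
  qed
  then show ?thesis
    using sum_sym_nodes_poly_eq_0[OF mono g_pos _ deg ends]
    unfolding Let_def f h_def sym_node_def by blast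
qed

end
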